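(* Let $K\ge 1$ be an integer, let $\lambda_1\ge\lambda_2\ge\cdots\ge\lambda_K>0$, $\Psi>0$, $r_{min}\ge 0$ be real numbers. For $\rho=(\rho_1,\dots,\rho_K)\in[0,\infty)^K$ define $$r_i^U(\rho)=\log_2\!\left(1+\frac{\rho_i\lambda_i}{\sum_{j=1}^{i-1}\rho_j\lambda_i+\Psi}\right),\qquad i=1,\dots,K.$$ Define $\rho_{i,min}$ recursively by $\rho_{i,min}=(2^{r_{min}}-1)\big(\sum_{j=1}^{i-1}\rho_{j,min}+\Psi/\lambda_i\big)$ (so that user $i$ gets rate exactly $r_{min}$ when every user $j$ is allocated $\rho_{j,min}$), and let $\rho_{sum}^{min}=\sum_{i=1}^K\rho_{i,min}$. For an allocation $\rho$ write $\triangle\rho_i=\rho_i-\rho_{i,min}$ and $$\rho_i^e=\Big(\triangle\rho_i-(2^{r_{min}}-1)\sum_{j=1}^{i-1}\triangle\rho_j\Big)2^{(K-i)r_{min}}$$ (the transformed excess power of user $i$). Let $\rho_U\ge\rho_{sum}^{min}$. Then, over all $\rho\in[0,\infty)^K$ with $\sum_{i=1}^K\rho_i=\rho_U$ and $r_i^U(\rho)\ge r_{min}$ for all $i$, the sum rate $\sum_{i=1}^K r_i^U(\rho)$ is maximized by allocating all the excess power to user $1$, i.e. by the allocation with $\rho_1^e=\rho_U-\rho_{sum}^{min}$ and $\rho_i^e=0$ for $i\ge 2$, and the maximum value is $$\sum_{i=1}^K r_i^U=Kr_{min}+\triangle r_1^U=Kr_{min}+\log_2\!\left(1+\frac{(\rho_U-\rho_{sum}^{min})\lambda_1}{\Psi\,2^{Kr_{min}}}\right),$$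 where $\triangle r_i^U=r_i^U(\rho)-r_{min}$ (so $\triangle r_i^U=0$ for $i\ge2$ at the optimum).
   Context: Setting: NOMA downlink with $K$ users decoded by successive interference cancellation; $\rho_i$ is the transmit SNR allocated to user $i$, $\lambda_i$ its estimated channel gain (users indexed from strongest to weakest channel), $\Psi>0$ a constant effective noise term, $r_{min}$ the minimum required unicast rate per user, $\rho_U$ the total unicast SNR. Empty sums are zero. *)

theory Defs
  imports Complex_Main
begin

text \<open>Users are indexed 1..K (strongest to weakest); allocations are functions nat => real,
only the values at indices 1..K matter.\<close>

definition rU :: "(nat \<Rightarrow> real) \<Rightarrow> real \<Rightarrow> (nat \<Rightarrow> real) \<Rightarrow> nat \<Rightarrow> real" where
  "rU lam Psi rho i =
     log 2 (1 + rho i * lam i / ((\<Sum>j\<in>{1..<i}. rho j * lam i) + Psi))"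

definition excess :: "nat \<Rightarrow> real \<Rightarrow> (nat \<Rightarrow> real) \<Rightarrow> (nat \<Rightarrow> real) \<Rightarrow> nat \<Rightarrow> real" where
  "excess K rmin rhomin rho i =
     ((rho i - rhomin i) - (2 powr rmin - 1) * (\<Sum>j\<in>{1..<i}. rho j - rhomin j))
       * 2 powr ((real K - real i) * rmin)"

definition feasible :: "nat \<Rightarrow> (nat \<Rightarrow> real) \<Rightarrow> real \<Rightarrow> real \<Rightarrow> real \<Rightarrow> (nat \<Rightarrow> real) \<Rightarrow> bool" where
  "feasible K lam Psi rmin rhoU rho \<longleftrightarrow>
     (\<forall>i\<in>{1..K}. rho i \<ge> 0) \<and> (\<Sum>i\<in>{1..K}. rho i) = rhoU \<and>
     (\<forall>i\<in>{1..K}. rU lam Psi rho i \<ge> rmin)"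

end

theory Submission
  imports Defs
begin

(* With S_i the power of the first i users and N_i = Psi / lam_i, the rate of user i is
   log (S_i + N_i) - log (S_(i-1) + N_i).  The sum rate therefore telescopes into
   log (rhoU + N_K) - log N_1 plus the terms log (S_i + N_i) - log (S_i + N_(i+1)), which are
   nondecreasing in S_i since N_i <= N_(i+1).  The constraints r_i >= r_min of users 2..K bound
   every S_i from above, by backward induction from S_K = rhoU, and the bound is attained by the
   allocation giving users 2..K exactly r_min.  That allocation is the one putting all excess power
   on user 1, because the partial sums of the transformed excess powers are the cumulative excess
   powers scaled by 2^((K - i) r_min). *)

lemma rU_Suc_eq_log_diff:
  assumes "lam (Suc i) > 0" "Psi > 0" "\<forall>j\<in>{1..Suc i}. rho j \<ge> 0"
  shows "rU lam Psi rho (Suc i) =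
    log 2 ((\<Sum>j\<in>{1..Suc i}. rho j) + Psi / lam (Suc i)) - log 2 ((\<Sum>j\<in>{1..i}. rho j) + Psi / lam (Suc i))"
proof -
  define s where "s = (\<Sum>j\<in>{1..i}. rho j)"
  define N where "N = Psi / lam (Suc i)"
  have "s \<ge> 0" using assms(3) unfolding s_def by (intro sum_nonneg) auto
  moreover have "N > 0" using assms by (simp add: N_def)
  moreover have "rho (Suc i) \<ge> 0" using assms(3) by simp
  moreover have "rU lam Psi rho (Suc i) = log 2 (1 + rho (Suc i) / (s + N))"
    using assms(1,2) \<open>s \<ge> 0\<close>
    by (simp add: rU_def N_def s_def atLeastLessThanSuc_atLeastAtMost sum_distrib_right[symmetric]
        field_simps add_nonneg_pos)
  ultimately have "rU lam Psi rho (Suc i) = log 2 (s + rho (Suc i) + N) - log 2 (s + N)"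
    by (simp add: field_simps log_divide_pos add_nonneg_pos)
  then show ?thesis by (simp add: s_def N_def)
qed

lemma rU_Suc_eq_log_divide:
  assumes "lam (Suc i) > 0" "Psi > 0" "\<forall>j\<in>{1..Suc i}. rho j \<ge> 0"
  shows "rU lam Psi rho (Suc i) =
    log 2 (((\<Sum>j\<in>{1..Suc i}. rho j) + Psi / lam (Suc i)) / ((\<Sum>j\<in>{1..i}. rho j) + Psi / lam (Suc i)))"
    and "(\<Sum>j\<in>{1..i}. rho j) + Psi / lam (Suc i) > 0"
    and "(\<Sum>j\<in>{1..Suc i}. rho j) + Psi / lam (Suc i) > 0"
proof -
  have "0 \<le> (\<Sum>j\<in>{1..i}. rho j)" "0 \<le> (\<Sum>j\<in>{1..Suc i}. rho j)"
    using assms(3) by (auto intro!: sum_nonneg simp del: sum.cl_ivl_Suc)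
  moreover have "Psi / lam (Suc i) > 0"
    using assms(1,2) by simp
  ultimately show pos: "(\<Sum>j\<in>{1..i}. rho j) + Psi / lam (Suc i) > 0"
            "(\<Sum>j\<in>{1..Suc i}. rho j) + Psi / lam (Suc i) > 0"
    by linarith+
  show "rU lam Psi rho (Suc i) =
    log 2 (((\<Sum>j\<in>{1..Suc i}. rho j) + Psi / lam (Suc i)) / ((\<Sum>j\<in>{1..i}. rho j) + Psi / lam (Suc i)))"
    using rU_Suc_eq_log_diff[of lam i Psi rho, OF assms] pos by (simp only: log_divide_pos)
qed

lemma rU_Suc_ge_iff:
  assumes "lam (Suc i) > 0" "Psi > 0" "\<forall>j\<in>{1..Suc i}. rho j \<ge> 0"
  shows "r \<le> rU lam Psi rho (Suc i) \<longleftrightarrow>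
    2 powr r * ((\<Sum>j\<in>{1..i}. rho j) + Psi / lam (Suc i)) \<le> (\<Sum>j\<in>{1..Suc i}. rho j) + Psi / lam (Suc i)"
  using rU_Suc_eq_log_divide[of lam i Psi rho, OF assms] by (simp add: le_log_iff pos_le_divide_eq)

lemma rU_Suc_le_iff:
  assumes "lam (Suc i) > 0" "Psi > 0" "\<forall>j\<in>{1..Suc i}. rho j \<ge> 0"
  shows "rU lam Psi rho (Suc i) \<le> r \<longleftrightarrow>
    (\<Sum>j\<in>{1..Suc i}. rho j) + Psi / lam (Suc i) \<le> 2 powr r * ((\<Sum>j\<in>{1..i}. rho j) + Psi / lam (Suc i))"
  using rU_Suc_eq_log_divide[of lam i Psi rho, OF assms] by (simp add: log_le_iff pos_divide_le_eq)

lemma log_shift_diff_mono: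
  fixes b x y M N :: real
  assumes "1 < b" "0 \<le> x" "x \<le> y" "0 < M" "M \<le> N"
  shows "log b (x + M) - log b (x + N) \<le> log b (y + M) - log b (y + N)"
proof -
  have "(x + M) * (y + N) \<le> (y + M) * (x + N)"
  proof -
    have "(y + M) * (x + N) - (x + M) * (y + N) = (N - M) * (y - x)"
      by (simp add: algebra_simps)
    also have "\<dots> \<ge> 0"
      using assms by simp
    finally show ?thesis by simp
  qed
  then have "log b ((x + M) * (y + N)) \<le> log b ((y + M) * (x + N))"
    using assms by simp
  then show ?thesis
    using assms by (simp add: log_mult_pos)
qed

lemma partial_sum_le_of_rate_bounds:
  assumes "\<forall>i\<in>{1..K}. lam i > 0" "Psi > 0"
    and "\<forall>i\<in>{1..K}. rho i \<ge> 0" "\<forall>i\<in>{1..K}. sigma i \<ge> 0"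
    and "(\<Sum>i\<in>{1..K}. rho i) = (\<Sum>i\<in>{1..K}. sigma i)"
    and "\<forall>i\<in>{2..K}. r \<le> rU lam Psi rho i" "\<forall>i\<in>{2..K}. rU lam Psi sigma i \<le> r"
    and "n \<le> K"
  shows "(\<Sum>j\<in>{1..n}. rho j) \<le> (\<Sum>j\<in>{1..n}. sigma j)"
  using \<open>n \<le> K\<close>
proof (induction n rule: inc_induct)
  case base
  show ?case using assms(5) by simp
next
  case (step n)
  show ?case
  proof (cases "n = 0")
    case False
    with step.hyps have n: "Suc n \<in> {2..K}" by auto
    define N where "N = Psi / lam (Suc n)"
    have "2 powr r * ((\<Sum>j\<in>{1..n}. rho j) + N) \<le> (\<Sum>j\<in>{1..Suc n}. rho j) + N"
      using rU_Suc_ge_iff[of lam n Psi rho r] assms n unfolding N_def by auto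
    also have "\<dots> \<le> (\<Sum>j\<in>{1..Suc n}. sigma j) + N"
      using step.IH by simp
    also have "\<dots> \<le> 2 powr r * ((\<Sum>j\<in>{1..n}. sigma j) + N)"
      using rU_Suc_le_iff[of lam n Psi sigma r] assms n unfolding N_def by auto
    finally show ?thesis by simp
  qed simp
qed

lemma sum_rU_le_of_rate_bounds:
  assumes "\<forall>i\<in>{1..<K}. lam i \<ge> lam (Suc i)" "\<forall>i\<in>{1..K}. lam i > 0" "Psi > 0"
    and "\<forall>i\<in>{1..K}. rho i \<ge> 0" "\<forall>i\<in>{1..K}. sigma i \<ge> 0"
    and "(\<Sum>i\<in>{1..K}. rho i) = (\<Sum>i\<in>{1..K}. sigma i)"
    and "\<forall>i\<in>{2..K}. r \<le> rU lam Psi rho i" "\<forall>i\<in>{2..K}. rU lam Psi sigma i \<le> r"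
  shows "(\<Sum>i\<in>{1..K}. rU lam Psi rho i) \<le> (\<Sum>i\<in>{1..K}. rU lam Psi sigma i)"
proof -
  define S where "S f n = (\<Sum>j\<in>{1..n}. f j)" for f :: "nat \<Rightarrow> real" and n
  define H where "H f n = (\<Sum>i\<in>{1..n}. rU lam Psi f i) - log 2 (S f n + Psi / lam n)" for f n
  have H_Suc: "H f (Suc n) = H f n + (log 2 (S f n + Psi / lam n) - log 2 (S f n + Psi / lam (Suc n)))"
    if "n < K" "\<forall>i\<in>{1..K}. f i \<ge> 0" for f n
    using rU_Suc_eq_log_diff[of lam n Psi f] that assms(2,3) by (simp add: H_def S_def)
  have "H rho n \<le> H sigma n" if "n \<le> K" for n
    using that
  proof (induction n) \<comment> \<open>at \<open>n = 0\<close> the junk value \<open>lam 0\<close> enters both sides identically\<close>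
    case (Suc n)
    have "log 2 (S rho n + Psi / lam n) - log 2 (S rho n + Psi / lam (Suc n))
       \<le> log 2 (S sigma n + Psi / lam n) - log 2 (S sigma n + Psi / lam (Suc n))"
    proof (cases "n = 0")
      case False
      with Suc.prems show ?thesis
        using partial_sum_le_of_rate_bounds[of K lam Psi rho sigma r n] assms
        by (intro log_shift_diff_mono) (auto simp: S_def intro!: sum_nonneg divide_left_mono)
    qed (simp add: S_def)
    with Suc show ?case
      using H_Suc[of n rho] H_Suc[of n sigma] assms(4,5) by simp
  qed (simp add: H_def S_def)
  from this[of K] show ?thesis
    using assms(6) by (simp add: H_def S_def)
qed

lemma partial_sums_eq_const_iff:
  fixes f :: "nat \<Rightarrow> 'a::ab_group_add"
  assumes "1 \<le> K"
  shows "(f 1 = D \<and> (\<forall>i\<in>{2..K}. f i = 0)) \<longleftrightarrow> (\<forall>i\<in>{1..K}. (\<Sum>j\<in>{1..i}. f j) = D)"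
proof
  assume f: "f 1 = D \<and> (\<forall>i\<in>{2..K}. f i = 0)"
  show "\<forall>i\<in>{1..K}. (\<Sum>j\<in>{1..i}. f j) = D"
  proof
    fix i assume "i \<in> {1..K}"
    then have "1 \<le> i" "i \<le> K" by auto
    then show "(\<Sum>j\<in>{1..i}. f j) = D"
      by (induction i rule: dec_induct) (use f in auto)
  qed
next
  assume sums: "\<forall>i\<in>{1..K}. (\<Sum>j\<in>{1..i}. f j) = D"
  have "f i = 0" if i: "i \<in> {2..K}" for i
  proof -
    obtain n where "i = Suc n"
      using i by (cases i) auto
    with i have n: "i = Suc n" "n \<in> {1..K}" "Suc n \<in> {1..K}"
      by auto
    then have "(\<Sum>j\<in>{1..Suc n}. f j) = D" "(\<Sum>j\<in>{1..n}. f j) = D"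
      using sums by blast+
    then show ?thesis
      using n(1) by simp
  qed
  moreover have "f 1 = D"
    using sums assms by force
  ultimately show "f 1 = D \<and> (\<forall>i\<in>{2..K}. f i = 0)" by blast
qed

lemma sum_excess:
  "(\<Sum>j\<in>{1..i}. excess K rmin rhomin rho j) =
     (\<Sum>j\<in>{1..i}. rho j - rhomin j) * 2 powr ((real K - real i) * rmin)"
proof (induction i)
  case (Suc i)
  define T where "T = (\<Sum>j\<in>{1..i}. rho j - rhomin j)"
  define p where "p = 2 powr ((real K - real (Suc i)) * rmin)"
  have "2 powr ((real K - real i) * rmin) = 2 powr rmin * p"
    unfolding p_def by (simp add: powr_add[symmetric] algebra_simps)
  then have "(\<Sum>j\<in>{1..i}. excess K rmin rhomin rho j) = T * (2 powr rmin * p)"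
    using Suc.IH by (simp add: T_def)
  moreover have "excess K rmin rhomin rho (Suc i) = (rho (Suc i) - rhomin (Suc i) - (2 powr rmin - 1) * T) * p"
    by (simp add: excess_def T_def p_def atLeastLessThanSuc_atLeastAtMost)
  ultimately have "(\<Sum>j\<in>{1..Suc i}. excess K rmin rhomin rho j) = (T + (rho (Suc i) - rhomin (Suc i))) * p"
    by (simp add: algebra_simps)
  then show ?case
    by (simp add: T_def p_def)
qed simp

(* The allocation with transformed excess powers D, 0, ..., 0, described by its partial sums. *)
definition excess_to_first :: "nat \<Rightarrow> real \<Rightarrow> (nat \<Rightarrow> real) \<Rightarrow> real \<Rightarrow> (nat \<Rightarrow> real) \<Rightarrow> bool" where
  "excess_to_first K rmin rhomin D rho \<longleftrightarrow>
     (\<forall>i\<in>{1..K}. (\<Sum>j\<in>{1..i}. rho j) = (\<Sum>j\<in>{1..i}. rhomin j) + D * 2 powr ((real i - real K) * rmin))"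

lemma excess_to_first_iff:
  assumes "1 \<le> K"
  shows "(excess K rmin rhomin rho 1 = D \<and> (\<forall>i\<in>{2..K}. excess K rmin rhomin rho i = 0)) \<longleftrightarrow>
    excess_to_first K rmin rhomin D rho"
proof -
  have level_iff: "(\<Sum>j\<in>{1..i}. rho j - rhomin j) * 2 powr ((real K - real i) * rmin) = D \<longleftrightarrow>
      (\<Sum>j\<in>{1..i}. rho j) = (\<Sum>j\<in>{1..i}. rhomin j) + D * 2 powr ((real i - real K) * rmin)" for i
  proof -
    define p where "p = 2 powr ((real K - real i) * rmin)"
    have inverse_p: "2 powr ((real i - real K) * rmin) = 1 / p"
      unfolding p_def by (simp add: powr_minus_divide[symmetric] algebra_simps)
    have "p > 0"
      unfolding p_def by simp
    then show ?thesis
      unfolding sum_subtractf p_def[symmetric] inverse_p by (auto simp: field_simps)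
  qed
  have "(excess K rmin rhomin rho 1 = D \<and> (\<forall>i\<in>{2..K}. excess K rmin rhomin rho i = 0)) \<longleftrightarrow>
      (\<forall>i\<in>{1..K}. (\<Sum>j\<in>{1..i}. excess K rmin rhomin rho j) = D)"
    by (rule partial_sums_eq_const_iff[OF assms])
  then show ?thesis
    unfolding sum_excess level_iff excess_to_first_def .
qed

lemma rhomin_nonneg:
  fixes K :: nat and lam rhomin :: "nat \<Rightarrow> real" and Psi rmin :: real
  assumes "rmin \<ge> 0" "\<forall>i\<in>{1..K}. lam i > 0" "Psi > 0"
    and "\<forall>i\<in>{1..K}. rhomin i = (2 powr rmin - 1) * ((\<Sum>j\<in>{1..<i}. rhomin j) + Psi / lam i)"
  shows "\<forall>i\<in>{1..K}. rhomin i \<ge> 0"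
proof
  fix i assume "i \<in> {1..K}"
  then show "rhomin i \<ge> 0"
  proof (induction i rule: less_induct)
    case (less i)
    have "(\<Sum>j\<in>{1..<i}. rhomin j) \<ge> 0"
      by (intro sum_nonneg) (use less in auto)
    moreover have "lam i > 0"
      using assms(2) less.prems by blast
    then have "Psi / lam i \<ge> 0"
      using assms(3) by simp
    moreover
    have "2 powr rmin - 1 \<ge> 0"
      using assms(1) ge_one_powr_ge_zero by simp
    ultimately show ?case
      using assms(4) less.prems by simp
  qed
qed

lemma excess_to_first_allocation_exists:
  assumes "rmin \<ge> 0" "D \<ge> 0" "\<forall>i\<in>{1..K}. rhomin i \<ge> 0"
  shows "\<exists>rho. (\<forall>i\<in>{1..K}. rho i \<ge> 0) \<and> excess_to_first K rmin rhomin D rho"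
proof -
  define W where "W i = (if i = 0 then 0 else D * 2 powr ((real i - real K) * rmin))" for i
  define rho where "rho i = rhomin i + (W i - W (i - 1))" for i
  have W_mono: "W (i - 1) \<le> W i" for i
  proof (cases "i \<le> 1")
    case False
    then have "2 powr ((real (i - 1) - real K) * rmin) \<le> 2 powr ((real i - real K) * rmin)"
      using assms(1) by (intro powr_mono) (auto intro: mult_right_mono)
    with False show ?thesis
      using assms(2) by (simp add: W_def mult_left_mono)
  qed (use assms(2) in \<open>auto simp: W_def\<close>)
  have "(\<Sum>j\<in>{1..i}. rho j) = (\<Sum>j\<in>{1..i}. rhomin j) + W i" for i
    by (induction i) (simp_all add: rho_def W_def)
  moreover have "\<forall>i\<in>{1..K}. rho i \<ge> 0"
    using assms(3) W_mono by (simp add: rho_def)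
  ultimately show ?thesis
    by (intro exI[of _ rho]) (simp add: excess_to_first_def W_def)
qed

lemma rU_later_users_excess_to_first:
  assumes "\<forall>i\<in>{1..K}. lam i > 0" "Psi > 0"
    and rhomin: "\<forall>i\<in>{1..K}. rhomin i = (2 powr rmin - 1) * ((\<Sum>j\<in>{1..<i}. rhomin j) + Psi / lam i)"
    and "\<forall>i\<in>{1..K}. rho i \<ge> 0"
    and sums: "excess_to_first K rmin rhomin D rho"
  shows "\<forall>i\<in>{2..K}. rU lam Psi rho i = rmin"
proof
  fix i assume i: "i \<in> {2..K}"
  then obtain n where n: "i = Suc n" "n \<in> {1..K}" "Suc n \<in> {1..K}"
    by (cases i) auto
  define N where "N = Psi / lam (Suc n)"
  define p where "p j = 2 powr ((real j - real K) * rmin)" for j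
  have partial_sums: "(\<Sum>j\<in>{1..Suc n}. rho j) = (\<Sum>j\<in>{1..Suc n}. rhomin j) + D * p (Suc n)"
    "(\<Sum>j\<in>{1..n}. rho j) = (\<Sum>j\<in>{1..n}. rhomin j) + D * p n"
    using sums n(2,3) unfolding excess_to_first_def p_def by blast+
  have "rhomin (Suc n) = (2 powr rmin - 1) * ((\<Sum>j\<in>{1..n}. rhomin j) + N)"
    using rhomin n(3) by (simp add: N_def atLeastLessThanSuc_atLeastAtMost)
  then have rhomin_step: "(\<Sum>j\<in>{1..Suc n}. rhomin j) + N = 2 powr rmin * ((\<Sum>j\<in>{1..n}. rhomin j) + N)"
    by (simp add: algebra_simps)
  have p_step: "p (Suc n) = 2 powr rmin * p n"
    unfolding p_def by (simp add: powr_add[symmetric] algebra_simps)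
  have "(\<Sum>j\<in>{1..Suc n}. rho j) + N = ((\<Sum>j\<in>{1..Suc n}. rhomin j) + N) + D * p (Suc n)"
    unfolding partial_sums by linarith
  also have "\<dots> = 2 powr rmin * ((\<Sum>j\<in>{1..n}. rho j) + N)"
    unfolding rhomin_step p_step partial_sums by (simp add: algebra_simps)
  finally have "(\<Sum>j\<in>{1..Suc n}. rho j) + N = 2 powr rmin * ((\<Sum>j\<in>{1..n}. rho j) + N)" .
  then show "rU lam Psi rho i = rmin"
    using rU_Suc_ge_iff[of lam n Psi rho rmin] rU_Suc_le_iff[of lam n Psi rho rmin] assms n
    by (simp add: N_def)
qed

lemma rU_first_user_excess_to_first:
  assumes "K \<ge> 1" "\<forall>i\<in>{1..K}. lam i > 0" "Psi > 0" "D \<ge> 0"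
    and rhomin: "\<forall>i\<in>{1..K}. rhomin i = (2 powr rmin - 1) * ((\<Sum>j\<in>{1..<i}. rhomin j) + Psi / lam i)"
    and "\<forall>i\<in>{1..K}. rho i \<ge> 0"
    and sums: "excess_to_first K rmin rhomin D rho"
  shows "rU lam Psi rho 1 = rmin + log 2 (1 + D * lam 1 / (Psi * 2 powr (real K * rmin)))"
proof -
  define N where "N = Psi / lam 1"
  define x where "x = D * lam 1 / (Psi * 2 powr (real K * rmin))"
  have "lam 1 > 0"
    using assms(1,2) by simp
  then have "N > 0" "x \<ge> 0"
    using assms(3,4) by (simp_all add: N_def x_def)
  have "2 powr ((1 - real K) * rmin) = 2 powr rmin / 2 powr (real K * rmin)"
    by (simp add: powr_diff[symmetric] algebra_simps)
  then have "D * 2 powr ((1 - real K) * rmin) = 2 powr rmin * N * x"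
    using \<open>lam 1 > 0\<close> assms(3) by (simp add: N_def x_def field_simps)
  moreover have "rho 1 = rhomin 1 + D * 2 powr ((1 - real K) * rmin)"
    using bspec[OF sums[unfolded excess_to_first_def], of 1] \<open>K \<ge> 1\<close> by simp
  moreover have "rhomin 1 = (2 powr rmin - 1) * N"
    using rhomin \<open>K \<ge> 1\<close> by (auto simp: N_def)
  ultimately have "rho 1 + N = 2 powr rmin * N * (1 + x)"
    by (simp add: algebra_simps)
  moreover have "rU lam Psi rho 1 = log 2 (rho 1 + N) - log 2 N"
    using rU_Suc_eq_log_diff[of lam 0 Psi rho] assms by (simp add: N_def)
  ultimately show ?thesis
    using \<open>N > 0\<close> \<open>x \<ge> 0\<close> by (simp add: log_mult_pos x_def)
qed

lemma rates_excess_to_first: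
  assumes "K \<ge> 1" "\<forall>i\<in>{1..K}. lam i > 0" "Psi > 0" "D \<ge> 0"
    and "\<forall>i\<in>{1..K}. rhomin i = (2 powr rmin - 1) * ((\<Sum>j\<in>{1..<i}. rhomin j) + Psi / lam i)"
    and "\<forall>i\<in>{1..K}. rho i \<ge> 0"
    and "excess_to_first K rmin rhomin D rho"
  shows "(\<Sum>i\<in>{1..K}. rU lam Psi rho i) = real K * rmin + log 2 (1 + D * lam 1 / (Psi * 2 powr (real K * rmin)))
    \<and> rU lam Psi rho 1 - rmin = log 2 (1 + D * lam 1 / (Psi * 2 powr (real K * rmin)))
    \<and> (\<forall>i\<in>{2..K}. rU lam Psi rho i = rmin)"
proof -
  note first = rU_first_user_excess_to_first[OF assms]
  note later = rU_later_users_excess_to_first[OF assms(2,3,5-7)]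
  have "(\<Sum>i\<in>{1..K}. rU lam Psi rho i) = rU lam Psi rho 1 + (\<Sum>i\<in>{2..K}. rU lam Psi rho i)"
    using \<open>K \<ge> 1\<close> by (simp add: sum.atLeast_Suc_atMost numeral_2_eq_2)
  also have "(\<Sum>i\<in>{2..K}. rU lam Psi rho i) = real (K - 1) * rmin"
    using later by simp
  finally show ?thesis
    using first later \<open>K \<ge> 1\<close> by (simp add: algebra_simps of_nat_diff)
qed

lemma feasible_excess_to_first:
  assumes "K \<ge> 1" "\<forall>i\<in>{1..K}. lam i > 0" "Psi > 0" "D \<ge> 0"
    and "\<forall>i\<in>{1..K}. rhomin i = (2 powr rmin - 1) * ((\<Sum>j\<in>{1..<i}. rhomin j) + Psi / lam i)"
    and "\<forall>i\<in>{1..K}. rho i \<ge> 0"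
    and "excess_to_first K rmin rhomin D rho"
    and "D = rhoU - (\<Sum>i\<in>{1..K}. rhomin i)"
  shows "feasible K lam Psi rmin rhoU rho"
proof -
  have "lam 1 > 0"
    using assms(1,2) by simp
  then have "0 \<le> D * lam 1 / (Psi * 2 powr (real K * rmin))"
    using assms(3,4) by simp
  then have "0 \<le> log 2 (1 + D * lam 1 / (Psi * 2 powr (real K * rmin)))"
    by simp
  then have "rmin \<le> rU lam Psi rho i" if "i \<in> {1..K}" for i
    using that rates_excess_to_first[OF assms(1-7)] by (cases "i = 1") auto
  moreover have "(\<Sum>i\<in>{1..K}. rho i) = rhoU"
    using assms(1,7,8) by (simp add: excess_to_first_def)
  ultimately show ?thesis
    using assms(6) by (simp add: feasible_def)
qed

theorem proposition2:
  fixes K :: nat and lam rhomin :: "nat \<Rightarrow> real" and Psi rmin rhoU :: real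
  assumes "K \<ge> 1"
    and "\<forall>i\<in>{1..<K}. lam i \<ge> lam (Suc i)"
    and "\<forall>i\<in>{1..K}. lam i > 0"
    and "Psi > 0" and "rmin \<ge> 0"
    and rhomin_def: "\<forall>i\<in>{1..K}. rhomin i = (2 powr rmin - 1) * ((\<Sum>j\<in>{1..<i}. rhomin j) + Psi / lam i)"
    and "rhoU \<ge> (\<Sum>i\<in>{1..K}. rhomin i)"
  defines "V \<equiv> real K * rmin +
      log 2 (1 + (rhoU - (\<Sum>i\<in>{1..K}. rhomin i)) * lam 1 / (Psi * 2 powr (real K * rmin)))"
  shows "(\<exists>rho. feasible K lam Psi rmin rhoU rho \<and>
            excess K rmin rhomin rho 1 = rhoU - (\<Sum>i\<in>{1..K}. rhomin i) \<and>
            (\<forall>i\<in>{2..K}. excess K rmin rhomin rho i = 0))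
       \<and> (\<forall>rho. feasible K lam Psi rmin rhoU rho \<and>
            excess K rmin rhomin rho 1 = rhoU - (\<Sum>i\<in>{1..K}. rhomin i) \<and>
            (\<forall>i\<in>{2..K}. excess K rmin rhomin rho i = 0) \<longrightarrow>
              (\<Sum>i\<in>{1..K}. rU lam Psi rho i) = V \<and>
              rU lam Psi rho 1 - rmin = log 2 (1 + (rhoU - (\<Sum>i\<in>{1..K}. rhomin i)) * lam 1 / (Psi * 2 powr (real K * rmin))) \<and>
              (\<forall>i\<in>{2..K}. rU lam Psi rho i = rmin))
       \<and> (\<forall>rho. feasible K lam Psi rmin rhoU rho \<longrightarrow> (\<Sum>i\<in>{1..K}. rU lam Psi rho i) \<le> V)"
proof -
  note K = assms(1) and lam_mono = assms(2) and lam_pos = assms(3) and Psi = assms(4)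
    and rmin = assms(5)
  define D where "D = rhoU - (\<Sum>i\<in>{1..K}. rhomin i)"
  have "D \<ge> 0"
    using assms(7) by (simp add: D_def)
  note excess_iff = excess_to_first_iff[OF K, of rmin rhomin _ D]
  note rates = rates_excess_to_first[OF K lam_pos Psi \<open>D \<ge> 0\<close> rhomin_def]
  obtain sigma where sigma_nonneg: "\<forall>i\<in>{1..K}. sigma i \<ge> 0"
    and sigma_excess: "excess_to_first K rmin rhomin D sigma"
    using excess_to_first_allocation_exists[OF rmin \<open>D \<ge> 0\<close> rhomin_nonneg[OF rmin lam_pos Psi rhomin_def]]
    by blast
  note sigma_feasible = feasible_excess_to_first[OF K lam_pos Psi \<open>D \<ge> 0\<close> rhomin_def sigma_nonneg sigma_excess D_def]
  note sigma_rates = rates[OF sigma_nonneg sigma_excess]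
  have exists: "\<exists>rho. feasible K lam Psi rmin rhoU rho \<and>
      excess K rmin rhomin rho 1 = D \<and> (\<forall>i\<in>{2..K}. excess K rmin rhomin rho i = 0)"
    using sigma_feasible sigma_excess excess_iff by blast
  have attained: "(\<Sum>i\<in>{1..K}. rU lam Psi rho i) = V \<and>
      rU lam Psi rho 1 - rmin = log 2 (1 + D * lam 1 / (Psi * 2 powr (real K * rmin))) \<and>
      (\<forall>i\<in>{2..K}. rU lam Psi rho i = rmin)"
    if "feasible K lam Psi rmin rhoU rho \<and>
      excess K rmin rhomin rho 1 = D \<and> (\<forall>i\<in>{2..K}. excess K rmin rhomin rho i = 0)" for rho
  proof -
    have "\<forall>i\<in>{1..K}. rho i \<ge> 0" "excess_to_first K rmin rhomin D rho"
      using that excess_iff by (auto simp: feasible_def)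
    then show ?thesis
      using rates[of rho] unfolding V_def D_def by blast
  qed
  have bound: "(\<Sum>i\<in>{1..K}. rU lam Psi rho i) \<le> V" if "feasible K lam Psi rmin rhoU rho" for rho
  proof -
    have "(\<Sum>i\<in>{1..K}. rU lam Psi rho i) \<le> (\<Sum>i\<in>{1..K}. rU lam Psi sigma i)"
      using that sigma_feasible sigma_nonneg sigma_rates
      by (intro sum_rU_le_of_rate_bounds[OF lam_mono lam_pos Psi, where r = rmin])
        (auto simp: feasible_def)
    then show ?thesis
      using sigma_rates unfolding V_def D_def by linarith
  qed
  show ?thesis
    unfolding D_def[symmetric] using exists attained bound by blast
qed

end
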